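(* Let $\Lambda$ be a source-free, finite, primitive, non-empty $k$-graph with shift $\sigma=(\sigma_1,\dots,\sigma_k)$ on its infinite-path space $\Lambda^\infty$. For every $p\in\mathbb{N}^k$ with $p\ge(1,\dots,1)$, the local homeomorphism $\sigma^p:\Lambda^\infty\to\Lambda^\infty$ is positively expansive and exact.
   Context: A $k$-graph is a countable category $\Lambda$ with a functor $d:\Lambda\to\mathbb{N}^k$ (degree) such that for every $\lambda\in\Lambda$ and $m,n\in\mathbb{N}^k$ with $d(\lambda)=m+n$ there are unique $\mu,\nu$ with $d(\mu)=m$, $d(\nu)=n$, $\lambda=\mu\nu$. $\Lambda^n=d^{-1}(n)$; $\Lambda^0$ are the vertices; $v\Lambda^n w=\{\lambda\in\Lambda^n: r(\lambda)=v,\ s(\lambda)=w\}$. $\Lambda$ is finite if each $\Lambda^n$ is finite, source-free if $v\Lambda^n\neq\varnothing$ for all $v,n$, primitive if there is $n\in\mathbb{N}^k\setminus\{0\}$ with $v\Lambda^n w\neq\varnothing$ for all vertices $v,w$. $\Omega_k$ is the $k$-graph with morphisms $\{(m,n)\in\mathbb{N}^k\times\mathbb{N}^k: m\le n\}$, $(l,m)(m,n)=(l,n)$, $d(m,n)=n-m$. $\Lambda^\infty$ is the set of degree-preserving functors $x:\Omega_k\to\Lambda$, with topology generated by cylinder sets $\mathcal{Z}(\lambda)=\{x: x(0,d(\lambda))=\lambda\}$; it is compact Hausdorff. The shift is $\sigma_i(x)(m,n)=x(m+\mathbf{e}_i,n+\mathbf{e}_i)$, so $\sigma^l(x)(m,n)=x(m+l,n+l)$.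 A map $T$ on a compact metric space $(X,d)$ is positively expansive if there is $\epsilon>0$ such that for all distinct $x,y$ there is $n\in\mathbb{N}$ with $d(T^n x,T^n y)\ge\epsilon$; it is exact if for every nonempty open $U$ there is $n$ with $T^n(U)=X$. (A compatible metric on $\Lambda^\infty$ is $\rho_\Lambda(x,y)=2^{-N_{xy}}$, $N_{xy}=\min\{n\in\mathbb{N}: x(nq,(n+1)q)\neq y(nq,(n+1)q)\}$ for a fixed $q\ge(1,\dots,1)$, $\min\varnothing=\infty$.) *)

theory Defs
  imports "HOL-Analysis.Analysis" "HOL-Library.Function_Algebras"
begin

text \<open>A k-graph is encoded as a small category whose morphisms form the set L of
 elements of type 'a; objects are identified with their identity morphisms.
 r, s are range and source, cmp mu nu is the composite (mu after nu, i.e. mu nu with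
 s mu = r nu), and d is the degree functor into N^k, where N^k is modelled as
 'k \<Rightarrow> nat for a finite type 'k with CARD('k) = k.\<close>

definition kg_vertices :: "'a set \<Rightarrow> ('a \<Rightarrow> 'a) \<Rightarrow> ('a \<Rightarrow> 'a) \<Rightarrow> 'a set" where
  "kg_vertices L r s = {v \<in> L. r v = v \<and> s v = v}"

definition is_kgraph ::
  "'a set \<Rightarrow> ('a \<Rightarrow> 'a) \<Rightarrow> ('a \<Rightarrow> 'a) \<Rightarrow> ('a \<Rightarrow> 'a \<Rightarrow> 'a)
    \<Rightarrow> ('a \<Rightarrow> ('k::finite \<Rightarrow> nat)) \<Rightarrow> bool" where
  "is_kgraph L r s cmp d \<longleftrightarrow>
     countable L \<and>
     (\<forall>lam\<in>L. r lam \<in> kg_vertices L r s \<and> s lam \<in> kg_vertices L r s) \<and>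
     (\<forall>\<mu>\<in>L. \<forall>\<nu>\<in>L. s \<mu> = r \<nu> \<longrightarrow>
        cmp \<mu> \<nu> \<in> L \<and> r (cmp \<mu> \<nu>) = r \<mu> \<and> s (cmp \<mu> \<nu>) = s \<nu> \<and>
        d (cmp \<mu> \<nu>) = d \<mu> + d \<nu>) \<and>
     (\<forall>lam\<in>L. cmp (r lam) lam = lam \<and> cmp lam (s lam) = lam) \<and>
     (\<forall>lam\<in>L. \<forall>\<mu>\<in>L. \<forall>\<nu>\<in>L. s lam = r \<mu> \<longrightarrow> s \<mu> = r \<nu> \<longrightarrow>
        cmp (cmp lam \<mu>) \<nu> = cmp lam (cmp \<mu> \<nu>)) \<and>
     (\<forall>v\<in>kg_vertices L r s. d v = 0) \<and>
     (\<forall>lam\<in>L. \<forall>m n. d lam = m + n \<longrightarrow>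
        (\<exists>!p. fst p \<in> L \<and> snd p \<in> L \<and> s (fst p) = r (snd p) \<and>
              d (fst p) = m \<and> d (snd p) = n \<and> cmp (fst p) (snd p) = lam))"

definition kg_finite :: "'a set \<Rightarrow> ('a \<Rightarrow> ('k::finite \<Rightarrow> nat)) \<Rightarrow> bool" where
  "kg_finite L d \<longleftrightarrow> (\<forall>n. finite {lam\<in>L. d lam = n})"

definition kg_source_free ::
  "'a set \<Rightarrow> ('a \<Rightarrow> 'a) \<Rightarrow> ('a \<Rightarrow> 'a) \<Rightarrow> ('a \<Rightarrow> ('k::finite \<Rightarrow> nat)) \<Rightarrow> bool" where
  "kg_source_free L r s d \<longleftrightarrow>
     (\<forall>v\<in>kg_vertices L r s. \<forall>n. \<exists>lam\<in>L. r lam = v \<and> d lam = n)"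

definition kg_primitive ::
  "'a set \<Rightarrow> ('a \<Rightarrow> 'a) \<Rightarrow> ('a \<Rightarrow> 'a) \<Rightarrow> ('a \<Rightarrow> ('k::finite \<Rightarrow> nat)) \<Rightarrow> bool" where
  "kg_primitive L r s d \<longleftrightarrow>
     (\<exists>n. n \<noteq> 0 \<and> (\<forall>v\<in>kg_vertices L r s. \<forall>w\<in>kg_vertices L r s.
          \<exists>lam\<in>L. d lam = n \<and> r lam = v \<and> s lam = w))"

text \<open>Infinite paths: degree-preserving functors x from Omega_k to the k-graph.
 x m n is the image of the morphism (m,n) of Omega_k (m \<le> n); outside m \<le> n the
 function is fixed to undefined so that paths are determined by their values on Omega_k.\<close>

definition kg_paths ::
  "'a set \<Rightarrow> ('a \<Rightarrow> 'a) \<Rightarrow> ('a \<Rightarrow> 'a) \<Rightarrow> ('a \<Rightarrow> 'a \<Rightarrow> 'a) \<Rightarrow> ('a \<Rightarrow> ('k::finite \<Rightarrow> nat))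
    \<Rightarrow> (('k \<Rightarrow> nat) \<Rightarrow> ('k \<Rightarrow> nat) \<Rightarrow> 'a) set" where
  "kg_paths L r s cmp d =
     {x. (\<forall>m n. \<not> m \<le> n \<longrightarrow> x m n = undefined) \<and>
         (\<forall>m n. m \<le> n \<longrightarrow> x m n \<in> L \<and> d (x m n) = n - m \<and>
                r (x m n) = x m m \<and> s (x m n) = x n n) \<and>
         (\<forall>l m n. l \<le> m \<longrightarrow> m \<le> n \<longrightarrow> x l n = cmp (x l m) (x m n))}"

definition kg_shift ::
  "('k::finite \<Rightarrow> nat) \<Rightarrow> (('k \<Rightarrow> nat) \<Rightarrow> ('k \<Rightarrow> nat) \<Rightarrow> 'a)
    \<Rightarrow> (('k \<Rightarrow> nat) \<Rightarrow> ('k \<Rightarrow> nat) \<Rightarrow> 'a)" where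
  "kg_shift l x = (\<lambda>m n. if m \<le> n then x (m + l) (n + l) else undefined)"

definition kg_cylinder ::
  "'a set \<Rightarrow> ('a \<Rightarrow> 'a) \<Rightarrow> ('a \<Rightarrow> 'a) \<Rightarrow> ('a \<Rightarrow> 'a \<Rightarrow> 'a) \<Rightarrow> ('a \<Rightarrow> ('k::finite \<Rightarrow> nat))
    \<Rightarrow> 'a \<Rightarrow> (('k \<Rightarrow> nat) \<Rightarrow> ('k \<Rightarrow> nat) \<Rightarrow> 'a) set" where
  "kg_cylinder L r s cmp d lam = {x \<in> kg_paths L r s cmp d. x 0 (d lam) = lam}"

definition kg_topology ::
  "'a set \<Rightarrow> ('a \<Rightarrow> 'a) \<Rightarrow> ('a \<Rightarrow> 'a) \<Rightarrow> ('a \<Rightarrow> 'a \<Rightarrow> 'a) \<Rightarrow> ('a \<Rightarrow> ('k::finite \<Rightarrow> nat))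
    \<Rightarrow> (('k \<Rightarrow> nat) \<Rightarrow> ('k \<Rightarrow> nat) \<Rightarrow> 'a) topology" where
  "kg_topology L r s cmp d =
     subtopology (topology_generated_by (kg_cylinder L r s cmp d ` L)) (kg_paths L r s cmp d)"

definition kg_metric ::
  "('k::finite \<Rightarrow> nat) \<Rightarrow> (('k \<Rightarrow> nat) \<Rightarrow> ('k \<Rightarrow> nat) \<Rightarrow> 'a)
    \<Rightarrow> (('k \<Rightarrow> nat) \<Rightarrow> ('k \<Rightarrow> nat) \<Rightarrow> 'a) \<Rightarrow> real" where
  "kg_metric q x y =
     (let D = {n::nat. x (\<lambda>i. n * q i) (\<lambda>i. (n + 1) * q i) \<noteq> y (\<lambda>i. n * q i) (\<lambda>i. (n + 1) * q i)}
      in if D = {} then 0 else (1/2) ^ (LEAST n. n \<in> D))"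

definition positively_expansive_on ::
  "'b set \<Rightarrow> ('b \<Rightarrow> 'b \<Rightarrow> real) \<Rightarrow> ('b \<Rightarrow> 'b) \<Rightarrow> bool" where
  "positively_expansive_on X \<rho> T \<longleftrightarrow>
     (\<exists>\<epsilon>>0. \<forall>x\<in>X. \<forall>y\<in>X. x \<noteq> y \<longrightarrow> (\<exists>n::nat. \<rho> ((T ^^ n) x) ((T ^^ n) y) \<ge> \<epsilon>))"

definition exact_map :: "'b topology \<Rightarrow> ('b \<Rightarrow> 'b) \<Rightarrow> bool" where
  "exact_map X T \<longleftrightarrow>
     (\<forall>U. openin X U \<longrightarrow> U \<noteq> {} \<longrightarrow> (\<exists>n::nat. (T ^^ n) ` U = topspace X))"

end

theory Submission
  imports Defs
begin

text \<open>
  Positive expansiveness: two distinct paths already differ on some initial segment x(0, T p),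
  hence on one of the blocks x(t p, (t+1) p); after t applications of \<sigma>^p they differ on their
  first block of degree p, which lies within the first \<Sum>p blocks of degree q, so their distance
  is at least 2^-\<Sum>p, a bound independent of the two paths.

  Exactness: an open set contains a cylinder Z(\<mu>). By primitivity and source-freeness, for N
  large and every vertex w there is an extension \<mu>\<alpha> of \<mu> of degree N p with source w. Given any
  path y with range w, the concatenation \<mu>\<alpha>y lies in Z(\<mu>) and is mapped to y by (\<sigma>^p)^N.
\<close>

lemma le_sum_scaled:
  fixes n p :: "'k::finite \<Rightarrow> nat"
  assumes "\<forall>i. p i \<ge> 1"
  shows "n \<le> (\<lambda>i. (\<Sum>j\<in>UNIV. n j) * p i)"
proof -
  have "n i \<le> (\<Sum>j\<in>UNIV. n j) * p i" for i
  proof -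
    have "n i \<le> (\<Sum>j\<in>UNIV. n j)" by (rule member_le_sum) auto
    also have "\<dots> \<le> (\<Sum>j\<in>UNIV. n j) * p i" using assms by simp
    finally show ?thesis .
  qed
  then show ?thesis by (simp add: le_fun_def)
qed

lemma kg_metric_ge:
  assumes "j \<le> M" and "x (\<lambda>i. j * q i) (\<lambda>i. (j + 1) * q i) \<noteq> y (\<lambda>i. j * q i) (\<lambda>i. (j + 1) * q i)"
  shows "(1/2) ^ M \<le> kg_metric q x y"
proof -
  define D where "D = {n::nat. x (\<lambda>i. n * q i) (\<lambda>i. (n + 1) * q i) \<noteq> y (\<lambda>i. n * q i) (\<lambda>i. (n + 1) * q i)}"
  have "j \<in> D" using assms(2) by (simp add: D_def)
  then have "(LEAST n. n \<in> D) \<le> M" using assms(1) Least_le[of "\<lambda>n. n \<in> D" j] by linarith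
  then have "(1/2::real) ^ M \<le> (1/2) ^ (LEAST n. n \<in> D)" by (intro power_decreasing) auto
  moreover have "kg_metric q x y = (1/2) ^ (LEAST n. n \<in> D)"
    using \<open>j \<in> D\<close> unfolding kg_metric_def D_def[symmetric] by auto
  ultimately show ?thesis by simp
qed

lemma kg_shift_kg_shift: "kg_shift l (kg_shift l' x) = kg_shift (l + l') x"
  by (intro ext) (simp add: kg_shift_def add.assoc add_right_mono)

locale k_graph =
  fixes L :: "'a set" and r s :: "'a \<Rightarrow> 'a" and cmp :: "'a \<Rightarrow> 'a \<Rightarrow> 'a"
    and d :: "'a \<Rightarrow> ('k::finite \<Rightarrow> nat)"
  assumes is_kgraph: "is_kgraph L r s cmp d"
begin

lemma range_vertex: "lam \<in> L \<Longrightarrow> r lam \<in> kg_vertices L r s"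
  and source_vertex: "lam \<in> L \<Longrightarrow> s lam \<in> kg_vertices L r s"
  using is_kgraph unfolding is_kgraph_def by blast+

lemma vertexD: "v \<in> kg_vertices L r s \<Longrightarrow> v \<in> L \<and> r v = v \<and> s v = v \<and> d v = 0"
  using is_kgraph unfolding is_kgraph_def kg_vertices_def by blast

lemma
  assumes "\<mu> \<in> L" "\<nu> \<in> L" "s \<mu> = r \<nu>"
  shows comp_in: "cmp \<mu> \<nu> \<in> L"
    and comp_range: "r (cmp \<mu> \<nu>) = r \<mu>"
    and comp_source: "s (cmp \<mu> \<nu>) = s \<nu>"
    and comp_degree: "d (cmp \<mu> \<nu>) = d \<mu> + d \<nu>"
  using is_kgraph assms unfolding is_kgraph_def by blast+

lemma comp_range_id: "lam \<in> L \<Longrightarrow> cmp (r lam) lam = lam"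
  and comp_source_id: "lam \<in> L \<Longrightarrow> cmp lam (s lam) = lam"
  using is_kgraph unfolding is_kgraph_def by blast+

lemma comp_assoc:
  "lam \<in> L \<Longrightarrow> \<mu> \<in> L \<Longrightarrow> \<nu> \<in> L \<Longrightarrow> s lam = r \<mu> \<Longrightarrow> s \<mu> = r \<nu> \<Longrightarrow>
   cmp (cmp lam \<mu>) \<nu> = cmp lam (cmp \<mu> \<nu>)"
  using is_kgraph unfolding is_kgraph_def by blast

lemma factorisation_exists:
  assumes "lam \<in> L" "d lam = m + n"
  obtains \<mu> \<nu> where "\<mu> \<in> L" "\<nu> \<in> L" "s \<mu> = r \<nu>" "d \<mu> = m" "d \<nu> = n" "cmp \<mu> \<nu> = lam"
proof -
  from is_kgraph assms have "\<exists>!p. fst p \<in> L \<and> snd p \<in> L \<and> s (fst p) = r (snd p) \<and>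
      d (fst p) = m \<and> d (snd p) = n \<and> cmp (fst p) (snd p) = lam"
    unfolding is_kgraph_def by blast
  then show thesis using that by blast
qed

lemma factorisation_unique:
  assumes "\<mu> \<in> L" "\<nu> \<in> L" "s \<mu> = r \<nu>" "\<mu>' \<in> L" "\<nu>' \<in> L" "s \<mu>' = r \<nu>'"
    and "cmp \<mu> \<nu> = cmp \<mu>' \<nu>'" "d \<mu> = d \<mu>'"
  shows "\<mu> = \<mu>' \<and> \<nu> = \<nu>'"
proof -
  let ?lam = "cmp \<mu> \<nu>"
  have "d \<mu> + d \<nu> = d \<mu>' + d \<nu>'"
    using comp_degree[OF assms(1-3)] comp_degree[OF assms(4-6)] assms(7) by simp
  then have "d \<nu> = d \<nu>'" using assms(8) by simp
  from is_kgraph comp_in[OF assms(1-3)] comp_degree[OF assms(1-3)]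
  have "\<exists>!p. fst p \<in> L \<and> snd p \<in> L \<and> s (fst p) = r (snd p) \<and>
      d (fst p) = d \<mu> \<and> d (snd p) = d \<nu> \<and> cmp (fst p) (snd p) = ?lam"
    unfolding is_kgraph_def by blast
  then have "(\<mu>, \<nu>) = (\<mu>', \<nu>')" using assms \<open>d \<nu> = d \<nu>'\<close> by (metis fst_conv snd_conv)
  then show ?thesis by simp
qed

subsection \<open>Segments of a morphism\<close>

definition factors :: "'a \<Rightarrow> 'a \<Rightarrow> 'a \<Rightarrow> 'a \<Rightarrow> bool" where
  "factors \<nu> \<alpha> \<omega> \<beta> \<longleftrightarrow>
     \<alpha> \<in> L \<and> \<omega> \<in> L \<and> \<beta> \<in> L \<and> s \<alpha> = r \<omega> \<and> s \<omega> = r \<beta> \<and> \<nu> = cmp (cmp \<alpha> \<omega>) \<beta>"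

text \<open>The segment \<nu>(a, b) of the paper: the middle factor of degree b - a in the factorisation
  of \<nu> whose first factor has degree a. It is meaningful for a \<le> b \<le> d \<nu>.\<close>

definition segment :: "'a \<Rightarrow> ('k \<Rightarrow> nat) \<Rightarrow> ('k \<Rightarrow> nat) \<Rightarrow> 'a" where
  "segment \<nu> a b = (THE \<omega>. \<exists>\<alpha> \<beta>. factors \<nu> \<alpha> \<omega> \<beta> \<and> d \<alpha> = a \<and> d \<omega> = b - a)"

lemma factors_unique:
  assumes "factors \<nu> \<alpha> \<omega> \<beta>" "factors \<nu> \<alpha>' \<omega>' \<beta>'" "d \<alpha> = d \<alpha>'" "d \<omega> = d \<omega>'"
  shows "\<alpha> = \<alpha>' \<and> \<omega> = \<omega>' \<and> \<beta> = \<beta>'"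
proof -
  have "cmp \<alpha> \<omega> = cmp \<alpha>' \<omega>' \<and> \<beta> = \<beta>'"
    using assms comp_in comp_source comp_degree
    by (intro factorisation_unique) (auto simp: factors_def)
  moreover from this have "\<alpha> = \<alpha>' \<and> \<omega> = \<omega>'"
    using assms by (intro factorisation_unique) (auto simp: factors_def)
  ultimately show ?thesis by simp
qed

lemma segment_eqI:
  assumes "factors \<nu> \<alpha> \<omega> \<beta>" "a = d \<alpha>" "b = d \<alpha> + d \<omega>"
  shows "segment \<nu> a b = \<omega>"
  unfolding segment_def
proof (rule the_equality)
  have "d \<omega> = b - a" using assms(2,3) by (simp add: fun_eq_iff)
  then show "\<exists>\<alpha>' \<beta>'. factors \<nu> \<alpha>' \<omega> \<beta>' \<and> d \<alpha>' = a \<and> d \<omega> = b - a"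
    using assms by blast
  fix \<omega>' assume "\<exists>\<alpha>' \<beta>'. factors \<nu> \<alpha>' \<omega>' \<beta>' \<and> d \<alpha>' = a \<and> d \<omega>' = b - a"
  then obtain \<alpha>' \<beta>' where "factors \<nu> \<alpha>' \<omega>' \<beta>'" "d \<alpha>' = a" "d \<omega>' = b - a" by blast
  with factors_unique[OF assms(1)] \<open>d \<omega> = b - a\<close> assms(2) show "\<omega>' = \<omega>" by metis
qed

lemma factors_exist:
  assumes "\<nu> \<in> L" "a \<le> b" "b \<le> d \<nu>"
  obtains \<alpha> \<omega> \<beta> where "factors \<nu> \<alpha> \<omega> \<beta>" "d \<alpha> = a" "d \<omega> = b - a"
proof -
  have "d \<nu> = b + (d \<nu> - b)" using assms by (auto simp: fun_eq_iff le_fun_def)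
  then obtain \<gamma> \<beta> where g: "\<gamma> \<in> L" "\<beta> \<in> L" "s \<gamma> = r \<beta>" "d \<gamma> = b" "cmp \<gamma> \<beta> = \<nu>"
    using factorisation_exists[OF assms(1)] by metis
  have "d \<gamma> = a + (b - a)" using assms g by (auto simp: fun_eq_iff le_fun_def)
  then obtain \<alpha> \<omega> where h: "\<alpha> \<in> L" "\<omega> \<in> L" "s \<alpha> = r \<omega>" "d \<alpha> = a" "d \<omega> = b - a" "cmp \<alpha> \<omega> = \<gamma>"
    using factorisation_exists[OF g(1)] by metis
  have "s \<omega> = r \<beta>" using g h comp_source[of \<alpha> \<omega>] by auto
  with g h show thesis using that unfolding factors_def by blast
qed

lemma
  assumes "\<nu> \<in> L" "a \<le> b" "b \<le> d \<nu>"
  shows segment_in: "segment \<nu> a b \<in> L" and segment_degree: "d (segment \<nu> a b) = b - a"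
proof -
  obtain \<alpha> \<omega> \<beta> where h: "factors \<nu> \<alpha> \<omega> \<beta>" "d \<alpha> = a" "d \<omega> = b - a"
    using factors_exist[OF assms] .
  have "segment \<nu> a b = \<omega>"
    by (rule segment_eqI[OF h(1)]) (use h assms(2) in \<open>auto simp: fun_eq_iff le_fun_def\<close>)
  then show "segment \<nu> a b \<in> L" "d (segment \<nu> a b) = b - a" using h by (auto simp: factors_def)
qed

lemma segment_whole:
  assumes "\<nu> \<in> L" shows "segment \<nu> 0 (d \<nu>) = \<nu>"
proof (rule segment_eqI)
  show "factors \<nu> (r \<nu>) \<nu> (s \<nu>)"
    using assms vertexD[OF range_vertex[OF assms]] vertexD[OF source_vertex[OF assms]]
    by (simp add: factors_def comp_range_id comp_source_id)
qed (use vertexD[OF range_vertex[OF assms]] in auto)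

lemma segment_range:
  assumes "\<nu> \<in> L" "a \<le> b" "b \<le> d \<nu>"
  shows "r (segment \<nu> a b) = segment \<nu> a a"
proof -
  obtain \<alpha> \<omega> \<beta> where h: "factors \<nu> \<alpha> \<omega> \<beta>" "d \<alpha> = a" "d \<omega> = b - a"
    using factors_exist[OF assms] .
  then have hL: "\<alpha> \<in> L" "\<omega> \<in> L" "\<beta> \<in> L" "s \<alpha> = r \<omega>" "s \<omega> = r \<beta>" "\<nu> = cmp (cmp \<alpha> \<omega>) \<beta>"
    unfolding factors_def by auto
  have rw: "r \<omega> \<in> L" "r (r \<omega>) = r \<omega>" "s (r \<omega>) = r \<omega>" "d (r \<omega>) = 0"
    using vertexD[OF range_vertex[OF hL(2)]] by auto
  have "segment \<nu> a b = \<omega>"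
    by (rule segment_eqI[OF h(1)]) (use h assms(2) in \<open>auto simp: fun_eq_iff le_fun_def\<close>)
  moreover have "factors \<nu> \<alpha> (r \<omega>) (cmp \<omega> \<beta>)"
    unfolding factors_def
    using hL rw comp_in[OF hL(2,3,5)] comp_range[OF hL(2,3,5)] comp_source_id[OF hL(1)]
      comp_assoc[OF hL(1-5)] by auto
  then have "segment \<nu> a a = r \<omega>" by (rule segment_eqI) (use h rw in auto)
  ultimately show ?thesis by simp
qed

lemma segment_source:
  assumes "\<nu> \<in> L" "a \<le> b" "b \<le> d \<nu>"
  shows "s (segment \<nu> a b) = segment \<nu> b b"
proof -
  obtain \<alpha> \<omega> \<beta> where h: "factors \<nu> \<alpha> \<omega> \<beta>" "d \<alpha> = a" "d \<omega> = b - a"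
    using factors_exist[OF assms] .
  then have hL: "\<alpha> \<in> L" "\<omega> \<in> L" "\<beta> \<in> L" "s \<alpha> = r \<omega>" "s \<omega> = r \<beta>" "\<nu> = cmp (cmp \<alpha> \<omega>) \<beta>"
    unfolding factors_def by auto
  have sw: "s \<omega> \<in> L" "r (s \<omega>) = s \<omega>" "s (s \<omega>) = s \<omega>" "d (s \<omega>) = 0"
    using vertexD[OF source_vertex[OF hL(2)]] by auto
  have b: "b = d \<alpha> + d \<omega>" using h assms(2) by (auto simp: fun_eq_iff le_fun_def)
  have "segment \<nu> a b = \<omega>" by (rule segment_eqI[OF h(1)]) (use h b in auto)
  moreover have "factors \<nu> (cmp \<alpha> \<omega>) (s \<omega>) \<beta>"
    unfolding factors_def
    using hL sw comp_in[OF hL(1,2,4)] comp_source[OF hL(1,2,4)] comp_source_id[OF hL(2)]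
      comp_source_id[OF comp_in[OF hL(1,2,4)]] by auto
  then have "segment \<nu> b b = s \<omega>"
    by (rule segment_eqI) (use b sw comp_degree[OF hL(1,2,4)] in auto)
  ultimately show ?thesis by simp
qed

lemma segment_comp:
  assumes "\<nu> \<in> L" "a \<le> b" "b \<le> c" "c \<le> d \<nu>"
  shows "segment \<nu> a c = cmp (segment \<nu> a b) (segment \<nu> b c)"
proof -
  have ac: "a \<le> c" using assms(2,3) by (rule order_trans)
  obtain \<alpha> \<omega> \<beta> where h: "factors \<nu> \<alpha> \<omega> \<beta>" "d \<alpha> = a" "d \<omega> = c - a"
    using factors_exist[OF assms(1) ac assms(4)] .
  then have hL: "\<alpha> \<in> L" "\<omega> \<in> L" "\<beta> \<in> L" "s \<alpha> = r \<omega>" "s \<omega> = r \<beta>" "\<nu> = cmp (cmp \<alpha> \<omega>) \<beta>"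
    unfolding factors_def by auto
  have "d \<omega> = (b - a) + (c - b)" using h assms(2,3) by (auto simp: fun_eq_iff le_fun_def)
  then obtain \<omega>1 \<omega>2 where w: "\<omega>1 \<in> L" "\<omega>2 \<in> L" "s \<omega>1 = r \<omega>2" "d \<omega>1 = b - a" "d \<omega>2 = c - b"
      "cmp \<omega>1 \<omega>2 = \<omega>"
    using factorisation_exists[OF hL(2)] by metis
  have r1: "r \<omega>1 = r \<omega>" "s \<omega>2 = s \<omega>" using comp_range[OF w(1-3)] comp_source[OF w(1-3)] w(6) by auto
  have c21: "cmp \<omega>2 \<beta> \<in> L" "r (cmp \<omega>2 \<beta>) = r \<omega>2"
    using comp_in[OF w(2) hL(3)] comp_range[OF w(2) hL(3)] hL r1 by auto
  have c11: "cmp \<alpha> \<omega>1 \<in> L" "s (cmp \<alpha> \<omega>1) = s \<omega>1" "d (cmp \<alpha> \<omega>1) = b"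
    using comp_in[OF hL(1) w(1)] comp_source[OF hL(1) w(1)] comp_degree[OF hL(1) w(1)] hL r1 h w assms(2)
    by (auto simp: fun_eq_iff le_fun_def)
  have "factors \<nu> \<alpha> \<omega>1 (cmp \<omega>2 \<beta>)"
    unfolding factors_def using hL w r1 c21 comp_assoc[OF hL(1-5)] comp_assoc[OF hL(1) w(1,2)]
      comp_assoc[OF w(1,2) hL(3)] comp_assoc[OF hL(1) w(1) c21(1)] by auto
  then have "segment \<nu> a b = \<omega>1"
    by (rule segment_eqI) (use h w assms(2) in \<open>auto simp: fun_eq_iff le_fun_def\<close>)
  moreover have "factors \<nu> (cmp \<alpha> \<omega>1) \<omega>2 \<beta>"
    unfolding factors_def using hL w r1 c11 comp_assoc[OF hL(1) w(1,2)] by auto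
  then have "segment \<nu> b c = \<omega>2"
    by (rule segment_eqI) (use c11 w assms(2,3) in \<open>auto simp: fun_eq_iff le_fun_def\<close>)
  moreover have "segment \<nu> a c = \<omega>"
    by (rule segment_eqI[OF h(1)]) (use h ac in \<open>auto simp: fun_eq_iff le_fun_def\<close>)
  ultimately show ?thesis using w by simp
qed


lemma segment_comp_left:
  assumes "\<mu> \<in> L" "\<gamma> \<in> L" "s \<mu> = r \<gamma>" "a \<le> b" "b \<le> d \<mu>"
  shows "segment (cmp \<mu> \<gamma>) a b = segment \<mu> a b"
proof -
  obtain \<alpha> \<omega> \<beta> where h: "factors \<mu> \<alpha> \<omega> \<beta>" "d \<alpha> = a" "d \<omega> = b - a"
    using factors_exist[OF assms(1,4,5)] .
  then have hL: "\<alpha> \<in> L" "\<omega> \<in> L" "\<beta> \<in> L" "s \<alpha> = r \<omega>" "s \<omega> = r \<beta>" "\<mu> = cmp (cmp \<alpha> \<omega>) \<beta>"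
    unfolding factors_def by auto
  have b: "b = d \<alpha> + d \<omega>" using h assms(4) by (auto simp: fun_eq_iff le_fun_def)
  have aw: "cmp \<alpha> \<omega> \<in> L" "s (cmp \<alpha> \<omega>) = s \<omega>" using comp_in[OF hL(1,2,4)] comp_source[OF hL(1,2,4)] by auto
  have "s \<beta> = r \<gamma>" using assms(3) hL(6) comp_source[OF aw(1) hL(3)] aw hL(5) by simp
  then have "factors (cmp \<mu> \<gamma>) \<alpha> \<omega> (cmp \<beta> \<gamma>)"
    using hL aw assms(2) comp_in[OF hL(3) assms(2)] comp_range[OF hL(3) assms(2)]
      comp_assoc[OF aw(1) hL(3) assms(2)] unfolding factors_def by auto
  then have "segment (cmp \<mu> \<gamma>) a b = \<omega>" by (rule segment_eqI) (use h b in auto)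
  moreover have "segment \<mu> a b = \<omega>" by (rule segment_eqI[OF h(1)]) (use h b in auto)
  ultimately show ?thesis by simp
qed

lemma segment_comp_right:
  assumes "\<mu> \<in> L" "\<gamma> \<in> L" "s \<mu> = r \<gamma>" "a \<le> b" "b \<le> d \<gamma>"
  shows "segment (cmp \<mu> \<gamma>) (a + d \<mu>) (b + d \<mu>) = segment \<gamma> a b"
proof -
  obtain \<alpha> \<omega> \<beta> where h: "factors \<gamma> \<alpha> \<omega> \<beta>" "d \<alpha> = a" "d \<omega> = b - a"
    using factors_exist[OF assms(2,4,5)] .
  then have hL: "\<alpha> \<in> L" "\<omega> \<in> L" "\<beta> \<in> L" "s \<alpha> = r \<omega>" "s \<omega> = r \<beta>" "\<gamma> = cmp (cmp \<alpha> \<omega>) \<beta>"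
    unfolding factors_def by auto
  have b: "b = d \<alpha> + d \<omega>" using h assms(4) by (auto simp: fun_eq_iff le_fun_def)
  have aw: "cmp \<alpha> \<omega> \<in> L" "r (cmp \<alpha> \<omega>) = r \<alpha>" using comp_in[OF hL(1,2,4)] comp_range[OF hL(1,2,4)] by auto
  have r\<alpha>: "s \<mu> = r \<alpha>"
    using assms(3) hL(5,6) comp_range[OF aw(1) hL(3)] comp_source[OF hL(1,2,4)] aw(2) by simp
  have \<mu>\<alpha>: "cmp \<mu> \<alpha> \<in> L" "s (cmp \<mu> \<alpha>) = s \<alpha>" "d (cmp \<mu> \<alpha>) = d \<mu> + d \<alpha>"
    using comp_in[OF assms(1) hL(1) r\<alpha>] comp_source[OF assms(1) hL(1) r\<alpha>]
      comp_degree[OF assms(1) hL(1) r\<alpha>] by auto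
  have "factors (cmp \<mu> \<gamma>) (cmp \<mu> \<alpha>) \<omega> \<beta>"
    using hL \<mu>\<alpha> comp_assoc[OF assms(1) hL(1,2) r\<alpha> hL(4)] comp_assoc[OF assms(1) aw(1) hL(3)] aw r\<alpha>
      comp_range[OF hL(1,2,4)] comp_source[OF hL(1,2,4)] unfolding factors_def by auto
  then have "segment (cmp \<mu> \<gamma>) (a + d \<mu>) (b + d \<mu>) = \<omega>"
    by (rule segment_eqI) (use h b \<mu>\<alpha> in \<open>auto simp: add.commute add.left_commute\<close>)
  moreover have "segment \<gamma> a b = \<omega>" by (rule segment_eqI[OF h(1)]) (use h b in auto)
  ultimately show ?thesis by simp
qed

abbreviation paths where "paths \<equiv> kg_paths L r s cmp d"

lemma
  assumes "x \<in> paths" "m \<le> n"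
  shows path_in: "x m n \<in> L" and path_degree: "d (x m n) = n - m"
    and path_range: "r (x m n) = x m m" and path_source: "s (x m n) = x n n"
  using assms unfolding kg_paths_def by blast+

lemma path_comp: "x \<in> paths \<Longrightarrow> l \<le> m \<Longrightarrow> m \<le> n \<Longrightarrow> x l n = cmp (x l m) (x m n)"
  and path_undefined: "x \<in> paths \<Longrightarrow> \<not> m \<le> n \<Longrightarrow> x m n = undefined"
  unfolding kg_paths_def by blast+

lemma path_vertex: "x \<in> paths \<Longrightarrow> x m m \<in> kg_vertices L r s"
  using path_in path_range path_source by (simp add: kg_vertices_def)

lemma path_segment:
  assumes "x \<in> paths" "a \<le> b" "b \<le> c"
  shows "segment (x 0 c) a b = x a b"
proof (rule segment_eqI)
  have ac: "a \<le> c" using assms(2,3) by (rule order_trans)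
  have "x 0 c = cmp (cmp (x 0 a) (x a b)) (x b c)"
    using path_comp[OF assms(1), of 0 a b] path_comp[OF assms(1), of 0 b c] assms(2,3) by auto
  then show "factors (x 0 c) (x 0 a) (x a b) (x b c)"
    using assms path_in path_range path_source ac unfolding factors_def by auto
  show "a = d (x 0 a)" "b = d (x 0 a) + d (x a b)"
    using path_degree[OF assms(1)] assms(2) by (auto simp: fun_eq_iff le_fun_def)
qed

lemma paths_agree_split:
  assumes "x \<in> paths" "y \<in> paths" "a \<le> b" "b \<le> c" "x a c = y a c"
  shows "x a b = y a b \<and> x b c = y b c"
proof (rule factorisation_unique)
  show "cmp (x a b) (x b c) = cmp (y a b) (y b c)" using assms path_comp by metis
qed (use assms path_in path_range path_source path_degree in auto)

lemma paths_agree_initial: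
  assumes "x \<in> paths" "y \<in> paths" "x 0 c = y 0 c" "b \<le> c"
  shows "x 0 b = y 0 b"
  using paths_agree_split[OF assms(1,2), of 0 b c] assms(3,4) by auto

lemma paths_differ_on_block:
  assumes "x \<in> paths" "y \<in> paths" "x 0 (\<lambda>i. T * p i) \<noteq> y 0 (\<lambda>i. T * p i)"
  shows "\<exists>t\<le>T. x (\<lambda>i. t * p i) (\<lambda>i. (t + 1) * p i) \<noteq> y (\<lambda>i. t * p i) (\<lambda>i. (t + 1) * p i)"
  using assms(3)
proof (induction T)
  case 0
  have z: "(\<lambda>i::'k. 0 * p i) = 0" "(\<lambda>i::'k. (0 + 1) * p i) = p" by (auto simp: fun_eq_iff)
  have "x 0 p \<noteq> y 0 p"
    using paths_agree_initial[OF assms(1,2), of p 0] 0 z by (auto simp: le_fun_def)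
  then show ?case using z by auto
next
  case (Suc T)
  let ?A = "\<lambda>i::'k. T * p i" and ?B = "\<lambda>i::'k. Suc T * p i"
  show ?case
  proof (cases "x 0 ?A = y 0 ?A")
    case True
    have "x 0 ?B = cmp (x 0 ?A) (x ?A ?B)" "y 0 ?B = cmp (y 0 ?A) (y ?A ?B)"
      using path_comp[OF assms(1)] path_comp[OF assms(2)] by (auto simp: le_fun_def)
    then have "x ?A ?B \<noteq> y ?A ?B" using True Suc.prems by metis
    then show ?thesis by (intro exI[of _ T]) auto
  next
    case False
    then show ?thesis using Suc.IH by (meson le_Suc_eq)
  qed
qed

subsection \<open>Prepending a morphism to a path\<close>

text \<open>The path lam y, for s lam = y(0, 0): its (a, b) entry is read off from the finite
  morphism lam y(0, b), whose degree d lam + b is large enough.\<close>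

definition prepend :: "'a \<Rightarrow> (('k \<Rightarrow> nat) \<Rightarrow> ('k \<Rightarrow> nat) \<Rightarrow> 'a) \<Rightarrow> (('k \<Rightarrow> nat) \<Rightarrow> ('k \<Rightarrow> nat) \<Rightarrow> 'a)"
  where "prepend lam y = (\<lambda>a b. if a \<le> b then segment (cmp lam (y 0 b)) a b else undefined)"

context
  fixes lam y assumes lam: "lam \<in> L" and y: "y \<in> paths" and source_lam: "s lam = y 0 0"
begin

lemma prepend_morphism:
  "cmp lam (y 0 c) \<in> L" "s (cmp lam (y 0 c)) = y c c" "d (cmp lam (y 0 c)) = d lam + c"
  using comp_in[OF lam] comp_source[OF lam] comp_degree[OF lam] path_in[OF y] path_range[OF y]
    path_source[OF y] path_degree[OF y] source_lam by auto

lemma prepend_eq_segment: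
  assumes "a \<le> b" "b \<le> c"
  shows "prepend lam y a b = segment (cmp lam (y 0 c)) a b"
proof -
  have "cmp lam (y 0 c) = cmp (cmp lam (y 0 b)) (y b c)"
    using path_comp[OF y, of 0 b c] assms(2) comp_assoc[OF lam path_in[OF y] path_in[OF y]]
      path_range[OF y] path_source[OF y] source_lam by auto
  moreover have "segment (cmp (cmp lam (y 0 b)) (y b c)) a b = segment (cmp lam (y 0 b)) a b"
    using prepend_morphism[of b] path_in[OF y assms(2)] path_range[OF y assms(2)] assms(1)
    by (intro segment_comp_left) (auto simp: le_fun_def)
  ultimately show ?thesis using assms(1) unfolding prepend_def by simp
qed

lemma prepend_path: "prepend lam y \<in> paths"
  unfolding kg_paths_def
proof (intro CollectI conjI allI impI)
  fix a b :: "'k \<Rightarrow> nat"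
  assume "\<not> a \<le> b"
  then show "prepend lam y a b = undefined" by (simp add: prepend_def)
next
  fix a b :: "'k \<Rightarrow> nat"
  assume ab: "a \<le> b"
  let ?\<nu> = "cmp lam (y 0 b)"
  have \<nu>: "?\<nu> \<in> L" "b \<le> d ?\<nu>" using prepend_morphism[of b] by (auto simp: le_fun_def)
  have eq: "prepend lam y a b = segment ?\<nu> a b" using ab by (simp add: prepend_def)
  show "prepend lam y a b \<in> L" "d (prepend lam y a b) = b - a"
    using segment_in[OF \<nu>(1) ab \<nu>(2)] segment_degree[OF \<nu>(1) ab \<nu>(2)] eq by simp_all
  show "r (prepend lam y a b) = prepend lam y a a"
    using segment_range[OF \<nu>(1) ab \<nu>(2)] eq prepend_eq_segment[of a a b] ab by simp
  show "s (prepend lam y a b) = prepend lam y b b"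
    using segment_source[OF \<nu>(1) ab \<nu>(2)] eq prepend_eq_segment[of b b b] by simp
next
  fix a b c :: "'k \<Rightarrow> nat"
  assume ab: "a \<le> b" and bc: "b \<le> c"
  let ?\<nu> = "cmp lam (y 0 c)"
  have \<nu>: "?\<nu> \<in> L" "c \<le> d ?\<nu>" using prepend_morphism[of c] by (auto simp: le_fun_def)
  show "prepend lam y a c = cmp (prepend lam y a b) (prepend lam y b c)"
    using segment_comp[OF \<nu>(1) ab bc \<nu>(2)] prepend_eq_segment[OF ab bc]
      prepend_eq_segment[OF bc order_refl] prepend_eq_segment[OF order_trans[OF ab bc] order_refl]
    by simp
qed

lemma prepend_initial: "prepend lam y 0 (d lam) = lam"
proof -
  have "prepend lam y 0 (d lam) = segment lam 0 (d lam)"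
    unfolding prepend_def
    using segment_comp_left[OF lam path_in[OF y] _ _ order_refl] path_range[OF y] source_lam
    by (auto simp: le_fun_def)
  then show ?thesis using segment_whole[OF lam] by simp
qed

lemma prepend_shift:
  assumes "a \<le> b"
  shows "prepend lam y (a + d lam) (b + d lam) = y a b"
proof -
  have "prepend lam y (a + d lam) (b + d lam) = segment (cmp lam (y 0 (b + d lam))) (a + d lam) (b + d lam)"
    using assms by (simp add: prepend_def le_fun_def)
  also have "\<dots> = segment (y 0 (b + d lam)) a b"
    using path_in[OF y] path_range[OF y] path_degree[OF y] source_lam assms
    by (intro segment_comp_right[OF lam]) (auto simp: le_fun_def)
  also have "\<dots> = y a b"
    using path_segment[OF y assms] by (simp add: le_fun_def)
  finally show ?thesis .
qed

end

subsection \<open>The shift and positive expansiveness\<close>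

lemma kg_shift_path:
  assumes "x \<in> paths" shows "kg_shift l x \<in> paths"
  unfolding kg_paths_def
proof (intro CollectI conjI allI impI)
  fix m n :: "'k \<Rightarrow> nat"
  assume "\<not> m \<le> n"
  then show "kg_shift l x m n = undefined" by (simp add: kg_shift_def)
next
  fix m n :: "'k \<Rightarrow> nat"
  assume mn: "m \<le> n"
  then have mn': "m + l \<le> n + l" by (simp add: le_fun_def)
  have "n + l - (m + l) = n - m" by (simp add: fun_eq_iff)
  with mn mn' path_in[OF assms] path_degree[OF assms] path_range[OF assms] path_source[OF assms]
  show "kg_shift l x m n \<in> L" "d (kg_shift l x m n) = n - m"
    "r (kg_shift l x m n) = kg_shift l x m m" "s (kg_shift l x m n) = kg_shift l x n n"
    by (simp_all add: kg_shift_def)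
next
  fix a m n :: "'k \<Rightarrow> nat"
  assume "a \<le> m" "m \<le> n"
  then show "kg_shift l x a n = cmp (kg_shift l x a m) (kg_shift l x m n)"
    using path_comp[OF assms, of "a + l" "m + l" "n + l"] order_trans[of a m n]
    by (simp add: kg_shift_def le_fun_def)
qed

lemma kg_shift_power:
  assumes "x \<in> paths" shows "(kg_shift p ^^ n) x = kg_shift (\<lambda>i. n * p i) x"
proof (induction n)
  case 0
  show ?case
  proof (intro ext)
    fix a b
    show "(kg_shift p ^^ 0) x a b = kg_shift (\<lambda>i. 0 * p i) x a b"
      using path_undefined[OF assms, of a b] by (simp add: kg_shift_def plus_fun_def)
  qed
next
  case (Suc n)
  have "p + (\<lambda>i. n * p i) = (\<lambda>i. Suc n * p i)" by (simp add: fun_eq_iff)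
  then show ?case using Suc kg_shift_kg_shift[of p "\<lambda>i. n * p i" x] by simp
qed

lemma kg_shift_power_separates:
  assumes p: "\<forall>i. p i \<ge> 1" and x: "x \<in> paths" and y: "y \<in> paths" and "x \<noteq> y"
  obtains t where "(kg_shift p ^^ t) x 0 p \<noteq> (kg_shift p ^^ t) y 0 p"
proof -
  obtain m n where mn: "x m n \<noteq> y m n" using \<open>x \<noteq> y\<close> by (auto simp: fun_eq_iff)
  then have "m \<le> n" using path_undefined[OF x] path_undefined[OF y] by metis
  then have "x 0 n \<noteq> y 0 n" using paths_agree_split[OF x y, of 0 m n] mn by auto
  then have "x 0 (\<lambda>i. (\<Sum>j\<in>UNIV. n j) * p i) \<noteq> y 0 (\<lambda>i. (\<Sum>j\<in>UNIV. n j) * p i)"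
    using paths_agree_initial[OF x y _ le_sum_scaled[OF p]] by blast
  then obtain t where t: "x (\<lambda>i. t * p i) (\<lambda>i. (t + 1) * p i) \<noteq> y (\<lambda>i. t * p i) (\<lambda>i. (t + 1) * p i)"
    using paths_differ_on_block[OF x y] by blast
  have "p + (\<lambda>i. t * p i) = (\<lambda>i. (t + 1) * p i)" by (simp add: fun_eq_iff)
  then have "(kg_shift p ^^ t) x 0 p \<noteq> (kg_shift p ^^ t) y 0 p"
    using t unfolding kg_shift_power[OF x] kg_shift_power[OF y] by (simp add: kg_shift_def le_fun_def)
  then show thesis by (rule that)
qed

lemma positively_expansive_kg_shift:
  assumes p: "\<forall>i. p i \<ge> 1" and q: "\<forall>i. q i \<ge> 1"
  shows "positively_expansive_on paths (kg_metric q) (kg_shift p)"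
  unfolding positively_expansive_on_def
proof (intro exI[of _ "(1/2::real) ^ (\<Sum>i\<in>UNIV. p i)"] conjI ballI impI)
  let ?M = "\<Sum>i\<in>UNIV. p i"
  show "(0::real) < (1/2) ^ ?M" by simp
  fix x y assume x: "x \<in> paths" and y: "y \<in> paths" and "x \<noteq> y"
  then obtain t where t: "(kg_shift p ^^ t) x 0 p \<noteq> (kg_shift p ^^ t) y 0 p"
    using kg_shift_power_separates[OF p] by blast
  define x' y' where "x' = (kg_shift p ^^ t) x" and "y' = (kg_shift p ^^ t) y"
  have x': "x' \<in> paths" and y': "y' \<in> paths"
    unfolding x'_def y'_def kg_shift_power[OF x] kg_shift_power[OF y] using x y by (simp_all add: kg_shift_path)
  have "x' 0 (\<lambda>i. ?M * q i) \<noteq> y' 0 (\<lambda>i. ?M * q i)"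
    using t paths_agree_initial[OF x' y' _ le_sum_scaled[OF q]] unfolding x'_def y'_def by blast
  then obtain j where "j \<le> ?M" "x' (\<lambda>i. j * q i) (\<lambda>i. (j + 1) * q i) \<noteq> y' (\<lambda>i. j * q i) (\<lambda>i. (j + 1) * q i)"
    using paths_differ_on_block[OF x' y'] by blast
  then have "(1/2) ^ ?M \<le> kg_metric q x' y'" by (rule kg_metric_ge)
  then show "\<exists>n. (1/2) ^ ?M \<le> kg_metric q ((kg_shift p ^^ n) x) ((kg_shift p ^^ n) y)"
    unfolding x'_def y'_def by blast
qed

subsection \<open>Exactness\<close>

lemma generated_by_cylinders_contains_cylinder:
  assumes "generate_topology_on (kg_cylinder L r s cmp d ` L) V" "x \<in> V" "x \<in> paths"
  shows "\<exists>m. \<forall>y\<in>paths. y 0 m = x 0 m \<longrightarrow> y \<in> V"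
  using assms
proof (induction arbitrary: x rule: generate_topology_on.induct)
  case Empty
  then show ?case by simp
next
  case (Int a b)
  then have "x \<in> a" "x \<in> b" by auto
  obtain m1 where m1: "\<forall>y\<in>paths. y 0 m1 = x 0 m1 \<longrightarrow> y \<in> a"
    using Int.IH(1)[OF \<open>x \<in> a\<close> Int.prems(2)] by blast
  obtain m2 where m2: "\<forall>y\<in>paths. y 0 m2 = x 0 m2 \<longrightarrow> y \<in> b"
    using Int.IH(2)[OF \<open>x \<in> b\<close> Int.prems(2)] by blast
  have "y \<in> a \<inter> b" if "y \<in> paths" "y 0 (sup m1 m2) = x 0 (sup m1 m2)" for y
    using paths_agree_initial[OF that(1) Int.prems(2) that(2) sup_ge1]
      paths_agree_initial[OF that(1) Int.prems(2) that(2) sup_ge2] m1 m2 that(1) by blast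
  then show ?case by blast
next
  case (UN K)
  then obtain k where "k \<in> K" "x \<in> k" by blast
  with UN.IH UN.prems(2) show ?case by blast
next
  case (Basis c)
  then obtain lam where "c = kg_cylinder L r s cmp d lam" by blast
  with Basis.prems have "x 0 (d lam) = lam" unfolding kg_cylinder_def by blast
  have "y \<in> c" if "y \<in> paths" "y 0 (d lam) = x 0 (d lam)" for y
  proof -
    have "y 0 (d lam) = lam" using that(2) \<open>x 0 (d lam) = lam\<close> by (rule trans)
    with that(1) \<open>c = kg_cylinder L r s cmp d lam\<close> show ?thesis by (simp add: kg_cylinder_def)
  qed
  then show ?case by (intro exI[of _ "d lam"]) blast
qed

lemma openin_kg_topology_contains_cylinder:
  assumes "openin (kg_topology L r s cmp d) U" "x \<in> U"
  obtains m where "\<forall>y\<in>paths. y 0 m = x 0 m \<longrightarrow> y \<in> U"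
proof -
  obtain V where V: "generate_topology_on (kg_cylinder L r s cmp d ` L) V" "U = V \<inter> paths"
    using assms(1) unfolding kg_topology_def openin_subtopology openin_topology_generated_by_iff by blast
  then show thesis
    using generated_by_cylinders_contains_cylinder[OF V(1)] assms(2) that by blast
qed

lemma topspace_kg_topology: "topspace (kg_topology L r s cmp d) = paths"
proof -
  have "x \<in> kg_cylinder L r s cmp d (x 0 0)" "x 0 0 \<in> L" if "x \<in> paths" for x
    using that path_in[OF that] path_degree[OF that, of 0 0] by (auto simp: kg_cylinder_def)
  then have "paths \<subseteq> \<Union> (kg_cylinder L r s cmp d ` L)" by blast
  then show ?thesis unfolding kg_topology_def by auto
qed

lemma connecting_morphism:
  assumes "kg_source_free L r s d"
    and n0: "\<forall>v\<in>kg_vertices L r s. \<forall>w\<in>kg_vertices L r s. \<exists>lam\<in>L. d lam = n0 \<and> r lam = v \<and> s lam = w"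
    and "n0 \<le> n" "v \<in> kg_vertices L r s" "w \<in> kg_vertices L r s"
  obtains lam where "lam \<in> L" "d lam = n" "r lam = v" "s lam = w"
proof -
  obtain \<alpha> where \<alpha>: "\<alpha> \<in> L" "r \<alpha> = v" "d \<alpha> = n - n0"
    using assms(1,4) unfolding kg_source_free_def by blast
  obtain \<beta> where \<beta>: "\<beta> \<in> L" "d \<beta> = n0" "r \<beta> = s \<alpha>" "s \<beta> = w"
    using n0 source_vertex[OF \<alpha>(1)] assms(5) by blast
  have "n - n0 + n0 = n" using assms(3) by (simp add: fun_eq_iff le_fun_def)
  with \<alpha> \<beta> show thesis
    using that[of "cmp \<alpha> \<beta>"] comp_in comp_degree comp_range comp_source by simp
qed

lemma kg_shift_preimage_in_cylinder:
  assumes x: "x \<in> paths" and y: "y \<in> paths" and \<alpha>: "\<alpha> \<in> L" "r \<alpha> = x m m" "s \<alpha> = y 0 0"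
  shows "\<exists>z\<in>paths. z 0 m = x 0 m \<and> kg_shift (m + d \<alpha>) z = y"
proof -
  have "0 \<le> m" by (simp add: le_fun_def)
  have \<mu>: "x 0 m \<in> L" "s (x 0 m) = r \<alpha>" "d (x 0 m) = m"
    using path_in[OF x \<open>0 \<le> m\<close>] path_source[OF x \<open>0 \<le> m\<close>] path_degree[OF x \<open>0 \<le> m\<close>] \<alpha>(2)
    by simp_all
  define lam where "lam = cmp (x 0 m) \<alpha>"
  have lam: "lam \<in> L" "s lam = y 0 0" "d lam = m + d \<alpha>"
    unfolding lam_def using comp_in[OF \<mu>(1) \<alpha>(1) \<mu>(2)] comp_source[OF \<mu>(1) \<alpha>(1) \<mu>(2)]
      comp_degree[OF \<mu>(1) \<alpha>(1) \<mu>(2)] \<mu>(3) \<alpha>(3) by simp_all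
  define z where "z = prepend lam y"
  have z: "z \<in> paths" "z 0 (d lam) = lam"
    unfolding z_def using prepend_path[OF lam(1) y lam(2)] prepend_initial[OF lam(1) y lam(2)] .
  have "m \<le> d lam" using lam(3) by (simp add: le_fun_def)
  have "z 0 m = segment lam 0 m" using path_segment[OF z(1) \<open>0 \<le> m\<close> \<open>m \<le> d lam\<close>] z(2) by simp
  also have "\<dots> = segment (x 0 m) 0 m"
    unfolding lam_def using segment_comp_left[OF \<mu>(1) \<alpha>(1) \<mu>(2) \<open>0 \<le> m\<close>] \<mu>(3) by simp
  also have "\<dots> = x 0 m" using segment_whole[OF \<mu>(1)] \<mu>(3) by simp
  finally have "z 0 m = x 0 m" .
  moreover have "kg_shift (d lam) z = y"
  proof (intro ext)
    fix a b
    show "kg_shift (d lam) z a b = y a b"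
      using prepend_shift[OF lam(1) y lam(2), of a b] path_undefined[OF y, of a b]
      by (cases "a \<le> b") (simp_all add: kg_shift_def z_def)
  qed
  ultimately show ?thesis using z(1) unfolding lam(3) by blast
qed

lemma exact_kg_shift:
  assumes sf: "kg_source_free L r s d" and prim: "kg_primitive L r s d" and p: "\<forall>i. p i \<ge> 1"
  shows "exact_map (kg_topology L r s cmp d) (kg_shift p)"
  unfolding exact_map_def topspace_kg_topology
proof (intro allI impI)
  fix U assume U: "openin (kg_topology L r s cmp d) U" "U \<noteq> {}"
  then obtain x where "x \<in> U" by blast
  with U(1) obtain m where m: "\<forall>y\<in>paths. y 0 m = x 0 m \<longrightarrow> y \<in> U"
    using openin_kg_topology_contains_cylinder by blast
  have U_paths: "U \<subseteq> paths" using openin_subset[OF U(1)] topspace_kg_topology by simp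
  with \<open>x \<in> U\<close> have x: "x \<in> paths" by blast
  obtain n0 where n0: "\<forall>v\<in>kg_vertices L r s. \<forall>w\<in>kg_vertices L r s. \<exists>lam\<in>L. d lam = n0 \<and> r lam = v \<and> s lam = w"
    using prim unfolding kg_primitive_def by blast
  define N where "N = (\<Sum>i\<in>UNIV. (m + n0) i)"
  have N: "m + n0 \<le> (\<lambda>i. N * p i)" unfolding N_def by (rule le_sum_scaled[OF p])
  have "y \<in> (kg_shift p ^^ N) ` U" if y: "y \<in> paths" for y
  proof -
    have Ni: "m i + n0 i \<le> N * p i" for i using N by (simp add: le_fun_def)
    then have "n0 i \<le> N * p i - m i" for i by (metis add.commute add_le_imp_le_diff)
    then have "n0 \<le> (\<lambda>i. N * p i) - m" by (simp add: le_fun_def)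
    then obtain \<alpha> where \<alpha>: "\<alpha> \<in> L" "d \<alpha> = (\<lambda>i. N * p i) - m" "r \<alpha> = x m m" "s \<alpha> = y 0 0"
      by (rule connecting_morphism[OF sf n0 _ path_vertex[OF x] path_vertex[OF y]])
    have "m i + (N * p i - m i) = N * p i" for i using Ni[of i] by arith
    then have N\<alpha>: "m + d \<alpha> = (\<lambda>i. N * p i)" using \<alpha>(2) by (simp add: fun_eq_iff)
    obtain z where z: "z \<in> paths" "z 0 m = x 0 m" "kg_shift (\<lambda>i. N * p i) z = y"
      using kg_shift_preimage_in_cylinder[OF x y \<alpha>(1,3,4), unfolded N\<alpha>] by blast
    then have "z \<in> U" using m by blast
    moreover have "y = (kg_shift p ^^ N) z" using kg_shift_power[OF z(1)] z(3) by simp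
    ultimately show ?thesis by (rule rev_image_eqI[where f = "kg_shift p ^^ N"])
  qed
  moreover have "(kg_shift p ^^ N) u \<in> paths" if "u \<in> U" for u
    using kg_shift_power[where x = u and n = N] kg_shift_path U_paths that by auto
  ultimately show "\<exists>n. (kg_shift p ^^ n) ` U = paths" by (intro exI[of _ N] equalityI subsetI) auto
qed

end

text \<open>Finiteness of the k-graph and non-emptiness of its vertex set are only needed for the
  infinite-path space to be a compact metric space; the two dynamical properties hold without them.\<close>

theorem lemma6p6:
  fixes L :: "'a set" and r s :: "'a \<Rightarrow> 'a" and cmp :: "'a \<Rightarrow> 'a \<Rightarrow> 'a"
    and d :: "'a \<Rightarrow> ('k::finite \<Rightarrow> nat)" and p :: "'k \<Rightarrow> nat"
  assumes "is_kgraph L r s cmp d"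
    and "kg_source_free L r s d"
    and "kg_finite L d"
    and "kg_primitive L r s d"
    and "kg_vertices L r s \<noteq> {}"
    and "\<forall>i. p i \<ge> 1"
  shows "(\<forall>q::'k \<Rightarrow> nat. (\<forall>i. q i \<ge> 1) \<longrightarrow>
            positively_expansive_on (kg_paths L r s cmp d) (kg_metric q) (kg_shift p))
         \<and> exact_map (kg_topology L r s cmp d) (kg_shift p)"
proof -
  interpret k_graph L r s cmp d by unfold_locales (rule assms(1))
  show ?thesis
    using positively_expansive_kg_shift[OF assms(6)] exact_kg_shift[OF assms(2,4,6)] by blast
qed

end
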